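(* Let $\rho = (\mathcal{V}, V, \mathbf{1}, \mathrm{var}, \mathrm{low}, \mathrm{high}, \mathrm{flip})$ be a COBDD with $\mathcal{V} = \mathcal{X} \,\dot\cup\, \mathcal{U}$, $\mathcal X=\{x_1,\dots,x_n\}$, $\mathcal U=\{u_1,\dots,u_r\}$, let $v \in V$ be a node and $b \in \mathbb{B}$ a flipping bit, and let $[\![ v, b]\!] = K(\mathbf{x}, \mathbf{u})$. Then the procedure SolveFunctionalEq$(\rho, v, b)$ outputs nodes $v_1, \ldots, v_r$ and boolean values $b_1, \ldots, b_r$ such that, writing $f_i(\mathbf x) := [\![ v_i, b_i]\!]$ for $i \in \{1,\dots,r\}$ (each $f_i$ depends only on $\mathbf x$), every $\mathbf{x} \in \mathrm{Dom}(K)$ satisfies $K(\mathbf{x}, f_1(\mathbf{x}), \ldots, f_r(\mathbf{x})) = 1$.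
   Context: $\mathbb{B}=\{0,1\}$; $+$, juxtaposition, $\bar{\ }$, $\oplus$ denote OR, AND, complement, XOR; $f|_{y=g}$ denotes substitution of $g$ for variable $y$ in $f$, and $\exists y\, f := f|_{y=0}+f|_{y=1}$. A COBDD is a tuple $\rho = (\mathcal{V}, V, \mathbf{1}, \mathrm{var}, \mathrm{low}, \mathrm{high}, \mathrm{flip})$ with $\mathcal V$ a finite totally ordered set of boolean variables, $V$ a finite set of nodes, $\mathbf 1\in V$ the terminal node, $\mathrm{var}: V\setminus\{\mathbf 1\}\to\mathcal V$, $\mathrm{high},\mathrm{low}: V\setminus\{\mathbf 1\}\to V$, $\mathrm{flip}: V\setminus\{\mathbf 1\}\to\mathbb B$, with variables strictly increasing along edges $v\to\mathrm{high}(v)$, $v\to\mathrm{low}(v)$; COBDDs are assumed reduced (no internal $v$ with $\mathrm{low}(v)=\mathrm{high}(v)$ and $\mathrm{flip}(v)=0$, and no two distinct nodes whose reachable sub-COBDDs are isomorphic). Semantics: $[\![ \mathbf 1, b]\!] := \bar b$ and, for internal $v$ with $\mathrm{var}(v)=y$, $[\![ v,b]\!] := y [\![ \mathrm{high}(v), b]\!] + \bar y [\![ \mathrm{low}(v), b\oplus \mathrm{flip}(v)]\!]$. Every boolean function is represented as $[\![ w,c]\!]$ for some node $w$ and bit $c$ (the COBDD being extended with new nodes as needed). Two operations are assumed available and correct: COBDD_APP, which given variables $y_1,\dots,y_k$, pairs $(w_1,c_1),\dots,(w_k,c_k)$ and $(w,c)$ returns $(w',c')$ with $[\![ w',c']\!]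 = [\![ w,c]\!]|_{y_1=[\![ w_1,c_1]\!],\dots,y_k=[\![ w_k,c_k]\!]}$; and COBDD_EX, which given variables $y_1,\dots,y_k$ and $(w,c)$ returns $(w',c')$ with $[\![ w',c']\!]=\exists y_1,\dots,y_k\,[\![ w,c]\!]$. The procedure SolveFunctionalEq$(\rho,v,b)$: for $i=1,\dots,r$ in order, it computes $(v_i,b_i)$ := COBDD_EX$(u_{i+1},\dots,u_r,$ COBDD_APP$(u_1,\dots,u_i, v_1,b_1,\dots,v_{i-1},b_{i-1},\mathbf 1,0, v,b))$, i.e. $[\![ v_i,b_i]\!] = \exists u_{i+1},\dots,u_r\, K(\mathbf x, [\![ v_1,b_1]\!],\dots,[\![ v_{i-1},b_{i-1}]\!], 1, u_{i+1},\dots,u_r)$ (note $[\![ \mathbf 1,0]\!]=1$); it returns $\langle v_1,b_1,\dots,v_r,b_r\rangle$. $\mathrm{Dom}(K) = \{\mathbf x \mid \exists \mathbf u\; K(\mathbf x,\mathbf u)=1\}$. *)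

theory Defs
  imports Main
begin

text \<open>COBDDs (complement-edge ordered BDDs).
  Fields that are only meaningful on internal nodes are total functions; only their values on
  nodes - {one} matter.\<close>

record ('v, 'n) cobdd =
  vars  :: "'v set"
  nodes :: "'n set"
  one   :: 'n
  var   :: "'n \<Rightarrow> 'v"
  low   :: "'n \<Rightarrow> 'n"
  high  :: "'n \<Rightarrow> 'n"
  flip  :: "'n \<Rightarrow> bool"

definition succs :: "('v, 'n) cobdd \<Rightarrow> ('n \<times> 'n) set" where
  "succs \<rho> = {(w, z). w \<in> nodes \<rho> \<and> w \<noteq> one \<rho> \<and> (z = low \<rho> w \<or> z = high \<rho> w)}"

definition reach :: "('v, 'n) cobdd \<Rightarrow> 'n \<Rightarrow> 'n set" where
  "reach \<rho> w = (succs \<rho>)\<^sup>* `` {w}"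

definition sub_iso :: "('v, 'n) cobdd \<Rightarrow> 'n \<Rightarrow> 'n \<Rightarrow> bool" where
  "sub_iso \<rho> w w' \<longleftrightarrow> (\<exists>h. bij_betw h (reach \<rho> w) (reach \<rho> w') \<and> h w = w' \<and>
     (\<forall>z\<in>reach \<rho> w. (z = one \<rho> \<longleftrightarrow> h z = one \<rho>) \<and>
        (z \<noteq> one \<rho> \<longrightarrow> var \<rho> (h z) = var \<rho> z \<and> low \<rho> (h z) = h (low \<rho> z) \<and>
                      high \<rho> (h z) = h (high \<rho> z) \<and> flip \<rho> (h z) = flip \<rho> z)))"

definition is_cobdd :: "('v::linorder, 'n) cobdd \<Rightarrow> bool" where
  "is_cobdd \<rho> \<longleftrightarrow> finite (vars \<rho>) \<and> finite (nodes \<rho>) \<and> one \<rho> \<in> nodes \<rho> \<and>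
     (\<forall>w\<in>nodes \<rho> - {one \<rho>}.
        var \<rho> w \<in> vars \<rho> \<and> low \<rho> w \<in> nodes \<rho> \<and> high \<rho> w \<in> nodes \<rho> \<and>
        (low \<rho> w \<noteq> one \<rho> \<longrightarrow> var \<rho> w < var \<rho> (low \<rho> w)) \<and>
        (high \<rho> w \<noteq> one \<rho> \<longrightarrow> var \<rho> w < var \<rho> (high \<rho> w)) \<and>
        \<not> (low \<rho> w = high \<rho> w \<and> \<not> flip \<rho> w)) \<and>
     (\<forall>w\<in>nodes \<rho>. \<forall>w'\<in>nodes \<rho>. w \<noteq> w' \<longrightarrow> \<not> sub_iso \<rho> w w')"

text \<open>Semantics: eval rho w b a r means [[w,b]] evaluates to r under assignment a.\<close>
inductive eval :: "('v, 'n) cobdd \<Rightarrow> 'n \<Rightarrow> bool \<Rightarrow> ('v \<Rightarrow> bool) \<Rightarrow> bool \<Rightarrow> bool"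
  for \<rho> where
  eval_one: "eval \<rho> (one \<rho>) b a (\<not> b)"
| eval_high: "w \<noteq> one \<rho> \<Longrightarrow> a (var \<rho> w) \<Longrightarrow> eval \<rho> (high \<rho> w) b a r \<Longrightarrow> eval \<rho> w b a r"
| eval_low: "w \<noteq> one \<rho> \<Longrightarrow> \<not> a (var \<rho> w) \<Longrightarrow> eval \<rho> (low \<rho> w) (b \<noteq> flip \<rho> w) a r
              \<Longrightarrow> eval \<rho> w b a r"

definition sem :: "('v, 'n) cobdd \<Rightarrow> 'n \<Rightarrow> bool \<Rightarrow> ('v \<Rightarrow> bool) \<Rightarrow> bool" where
  "sem \<rho> w b a = (THE r. eval \<rho> w b a r)"

definition extends :: "('v, 'n) cobdd \<Rightarrow> ('v, 'n) cobdd \<Rightarrow> bool" where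
  "extends \<rho> \<rho>' \<longleftrightarrow> vars \<rho>' = vars \<rho> \<and> nodes \<rho> \<subseteq> nodes \<rho>' \<and> one \<rho>' = one \<rho> \<and>
     (\<forall>w\<in>nodes \<rho> - {one \<rho>}. var \<rho>' w = var \<rho> w \<and> low \<rho>' w = low \<rho> w \<and>
        high \<rho>' w = high \<rho> w \<and> flip \<rho>' w = flip \<rho> w)"

definition subst_assign ::
  "('v, 'n) cobdd \<Rightarrow> 'v list \<Rightarrow> ('n \<times> bool) list \<Rightarrow> ('v \<Rightarrow> bool) \<Rightarrow> ('v \<Rightarrow> bool)" where
  "subst_assign \<rho> ys ps a = (\<lambda>y. case map_of (zip ys ps) y of
       None \<Rightarrow> a y | Some (w, c) \<Rightarrow> sem \<rho> w c a)"

type_synonym ('v, 'n) app_op =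
  "('v, 'n) cobdd \<Rightarrow> 'v list \<Rightarrow> ('n \<times> bool) list \<Rightarrow> 'n \<times> bool \<Rightarrow> ('v, 'n) cobdd \<times> 'n \<times> bool"
type_synonym ('v, 'n) ex_op =
  "('v, 'n) cobdd \<Rightarrow> 'v list \<Rightarrow> 'n \<times> bool \<Rightarrow> ('v, 'n) cobdd \<times> 'n \<times> bool"

definition app_correct :: "('v::linorder, 'n) app_op \<Rightarrow> bool" where
  "app_correct app \<longleftrightarrow> (\<forall>\<rho> ys ps w c. is_cobdd \<rho> \<and> distinct ys \<and> set ys \<subseteq> vars \<rho> \<and>
      length ps = length ys \<and> (\<forall>p\<in>set ps. fst p \<in> nodes \<rho>) \<and> w \<in> nodes \<rho> \<longrightarrow>
      (case app \<rho> ys ps (w, c) of (\<rho>', w', c') \<Rightarrow>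
         is_cobdd \<rho>' \<and> extends \<rho> \<rho>' \<and> w' \<in> nodes \<rho>' \<and>
         (\<forall>a. sem \<rho>' w' c' a = sem \<rho> w c (subst_assign \<rho> ys ps a))))"

definition ex_correct :: "('v::linorder, 'n) ex_op \<Rightarrow> bool" where
  "ex_correct ex \<longleftrightarrow> (\<forall>\<rho> ys w c. is_cobdd \<rho> \<and> set ys \<subseteq> vars \<rho> \<and> w \<in> nodes \<rho> \<longrightarrow>
      (case ex \<rho> ys (w, c) of (\<rho>', w', c') \<Rightarrow>
         is_cobdd \<rho>' \<and> extends \<rho> \<rho>' \<and> w' \<in> nodes \<rho>' \<and>
         (\<forall>a. sem \<rho>' w' c' a = (\<exists>a'. (\<forall>y. y \<notin> set ys \<longrightarrow> a' y = a y) \<and> sem \<rho> w c a'))))"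

text \<open>The loop of SolveFunctionalEq. acc holds the already processed (u_j, (v_j, b_j)).\<close>
fun solve_aux :: "('v, 'n) app_op \<Rightarrow> ('v, 'n) ex_op \<Rightarrow> ('v, 'n) cobdd \<Rightarrow>
    ('v \<times> ('n \<times> bool)) list \<Rightarrow> 'v list \<Rightarrow> 'n \<Rightarrow> bool \<Rightarrow> ('v, 'n) cobdd \<times> ('n \<times> bool) list" where
  "solve_aux app ex \<rho> acc [] v b = (\<rho>, [])"
| "solve_aux app ex \<rho> acc (u # rest) v b =
     (case app \<rho> (map fst acc @ [u]) (map snd acc @ [(one \<rho>, False)]) (v, b) of
       (\<rho>1, w1, c1) \<Rightarrow> (case ex \<rho>1 rest (w1, c1) of
         (\<rho>2, w2, c2) \<Rightarrow> (case solve_aux app ex \<rho>2 (acc @ [(u, (w2, c2))]) rest v b of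
           (\<rho>f, res) \<Rightarrow> (\<rho>f, (w2, c2) # res))))"

definition SolveFunctionalEq :: "('v, 'n) app_op \<Rightarrow> ('v, 'n) ex_op \<Rightarrow> ('v, 'n) cobdd \<Rightarrow>
    'v list \<Rightarrow> 'n \<Rightarrow> bool \<Rightarrow> ('v, 'n) cobdd \<times> ('n \<times> bool) list" where
  "SolveFunctionalEq app ex \<rho> us v b = solve_aux app ex \<rho> [] us v b"

end

theory Submission
  imports Defs
begin

text \<open>Write \<open>K = [[v, b]]\<close>. The \<open>i\<close>-th computed function is
  \<open>f\<^sub>i(x) = \<exists>u\<^sub>i\<^sub>+\<^sub>1 \<dots> u\<^sub>r. K(x, f\<^sub>1(x), \<dots>, f\<^sub>i\<^sub>-\<^sub>1(x), 1, u\<^sub>i\<^sub>+\<^sub>1, \<dots>, u\<^sub>r)\<close>, which depends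
  on \<open>x\<close> only, since the earlier \<open>f\<^sub>j\<close> do. The invariant is: if \<open>x \<in> Dom(K)\<close> then \<open>K\<close> has a
  model extending \<open>x, f\<^sub>1(x), \<dots>, f\<^sub>i(x)\<close>. Given such a model for \<open>i - 1\<close>, either \<open>f\<^sub>i(x) = 1\<close>, and
  the model witnessing the existential in \<open>f\<^sub>i(x)\<close> works, or \<open>f\<^sub>i(x) = 0\<close>, and then the old model
  must already have \<open>u\<^sub>i = 0\<close>, for otherwise it would witness \<open>f\<^sub>i(x) = 1\<close>.\<close>

definition determined_by :: "'v set \<Rightarrow> (('v \<Rightarrow> bool) \<Rightarrow> bool) \<Rightarrow> bool" where
  "determined_by X f \<longleftrightarrow> (\<forall>a a'. (\<forall>x\<in>X. a x = a' x) \<longrightarrow> f a = f a')"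

definition subst_fun :: "('v \<rightharpoonup> (('v \<Rightarrow> bool) \<Rightarrow> bool)) \<Rightarrow> ('v \<Rightarrow> bool) \<Rightarrow> 'v \<Rightarrow> bool" where
  "subst_fun G a y = (case G y of None \<Rightarrow> a y | Some f \<Rightarrow> f a)"

definition exists_vars :: "'v set \<Rightarrow> (('v \<Rightarrow> bool) \<Rightarrow> bool) \<Rightarrow> ('v \<Rightarrow> bool) \<Rightarrow> bool" where
  "exists_vars R f a \<longleftrightarrow> (\<exists>a'. (\<forall>y. y \<notin> R \<longrightarrow> a' y = a y) \<and> f a')"

definition has_model_fixing ::
    "(('v \<Rightarrow> bool) \<Rightarrow> bool) \<Rightarrow> 'v set \<Rightarrow> ('v \<rightharpoonup> (('v \<Rightarrow> bool) \<Rightarrow> bool)) \<Rightarrow> ('v \<Rightarrow> bool) \<Rightarrow> bool" where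
  "has_model_fixing K X G a \<longleftrightarrow>
     (\<exists>a'. (\<forall>x\<in>X. a' x = a x) \<and> (\<forall>y f. G y = Some f \<longrightarrow> a' y = f a) \<and> K a')"

lemma determined_byD: "determined_by X f \<Longrightarrow> (\<And>x. x \<in> X \<Longrightarrow> a x = a' x) \<Longrightarrow> f a = f a'"
  unfolding determined_by_def by blast

lemma subst_fun_cong:
  assumes "\<forall>f\<in>ran G. determined_by X f" and "\<And>y. y \<in> X \<union> R \<Longrightarrow> a y = a' y"
    and "y \<in> X \<union> dom G \<union> R"
  shows "subst_fun G a y = subst_fun G a' y"
proof (cases "G y")
  case (Some f)
  then have "determined_by X f" using assms(1) by (auto intro: ranI)
  then have "f a = f a'" using assms(2) by (rule determined_byD) simp
  then show ?thesis using Some by (simp add: subst_fun_def)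
qed (use assms in \<open>auto simp: subst_fun_def\<close>)

lemma has_model_fixing_subst_fun:
  assumes "determined_by (X \<union> dom G) K" and "has_model_fixing K X G a"
  shows "K (subst_fun G a)"
proof -
  obtain a' where a': "\<forall>x\<in>X. a' x = a x" "\<forall>y f. G y = Some f \<longrightarrow> a' y = f a" "K a'"
    using assms(2) unfolding has_model_fixing_def by blast
  have "K a' = K (subst_fun G a)"
    by (rule determined_byD[OF assms(1)]) (use a' in \<open>auto simp: subst_fun_def split: option.split\<close>)
  with a'(3) show ?thesis by simp
qed

lemma has_model_fixing_empty:
  "has_model_fixing K X Map.empty a \<longleftrightarrow> (\<exists>a'. (\<forall>x\<in>X. a' x = a x) \<and> K a')"
  by (simp add: has_model_fixing_def)

text \<open>One round of the solver: \<open>G\<close> fixes the variables solved so far, \<open>u\<close> is solved now,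
  and \<open>R\<close> holds the variables still to be solved.\<close>

context
  fixes K :: "('v \<Rightarrow> bool) \<Rightarrow> bool" and X R :: "'v set" and G and u :: 'v
  assumes K_det: "determined_by (X \<union> dom G \<union> {u} \<union> R) K"
    and G_det: "\<forall>f\<in>ran G. determined_by X f"
    and X_disj: "X \<inter> (dom G \<union> {u} \<union> R) = {}"
begin

private abbreviation "G' \<equiv> G(u \<mapsto> (\<lambda>_. True))"

private abbreviation "F \<equiv> exists_vars R (K \<circ> subst_fun G')"

private lemma X_outside: "x \<in> X \<Longrightarrow> G x = None \<and> x \<noteq> u \<and> x \<notin> R"
  using X_disj by blast

private lemma G'_det: "\<forall>f\<in>ran G'. determined_by X f"
  using G_det ran_map_upd_Some by (auto simp: ran_def determined_by_def)

lemma determined_by_exists_vars_step: "determined_by X F"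
  unfolding determined_by_def
proof (intro allI impI)
  have imp: "F a'" if "F a" and a_a': "\<forall>x\<in>X. a x = a' x" for a a'
  proof -
    obtain a1 where a1: "\<forall>y. y \<notin> R \<longrightarrow> a1 y = a y" "K (subst_fun G' a1)"
      using \<open>F a\<close> by (auto simp: exists_vars_def)
    define a2 where "a2 y = (if y \<in> R then a1 y else a' y)" for y
    have "K (subst_fun G' a2) = K (subst_fun G' a1)"
    proof (rule determined_byD[OF K_det])
      fix y assume "y \<in> X \<union> dom G \<union> {u} \<union> R"
      then show "subst_fun G' a2 y = subst_fun G' a1 y"
        by (intro subst_fun_cong[OF G'_det, where R = R]) (use a1 a_a' X_disj in \<open>auto simp: a2_def\<close>)
    qed
    with a1(2) show "F a'"
      unfolding exists_vars_def by (intro exI[of _ a2]) (simp add: a2_def)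
  qed
  fix a a' :: "'v \<Rightarrow> bool" assume agree: "\<forall>x\<in>X. a x = a' x"
  show "F a = F a'"
  proof
    assume "F a"
    then show "F a'" using agree by (rule imp)
  next
    assume "F a'"
    then show "F a" by (rule imp) (use agree in auto)
  qed
qed

lemma has_model_fixing_step:
  assumes "has_model_fixing K X G a"
  shows "has_model_fixing K X (G(u \<mapsto> F)) a"
proof (cases "F a")
  case True
  then obtain a1 where a1: "\<forall>y. y \<notin> R \<longrightarrow> a1 y = a y" "K (subst_fun G' a1)"
    by (auto simp: exists_vars_def)
  have on_X: "subst_fun G' a1 x = a x" if "x \<in> X" for x
    using a1(1) X_outside[OF that] by (simp add: subst_fun_def)
  have fixed: "subst_fun G' a1 y = f a" if "(G(u \<mapsto> F)) y = Some f" for y f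
  proof (cases "y = u")
    case False
    with that have "G y = Some f" by simp
    then have "f a1 = f a"
      using G_det a1(1) X_outside by (intro determined_byD[of X f a1 a]) (auto intro: ranI)
    with \<open>G y = Some f\<close> False show ?thesis by (simp add: subst_fun_def)
  qed (use that True in \<open>simp add: subst_fun_def\<close>)
  show ?thesis
    unfolding has_model_fixing_def using on_X fixed a1(2) by blast
next
  case False
  obtain a' where a': "\<forall>x\<in>X. a' x = a x" "\<forall>y f. G y = Some f \<longrightarrow> a' y = f a" "K a'"
    using assms unfolding has_model_fixing_def by blast
  have "\<not> a' u"
  proof
    assume "a' u"
    define a1 where "a1 y = (if y \<in> R then a' y else a y)" for y
    have "subst_fun G' a1 y = a' y" if "y \<in> X \<union> dom G \<union> {u} \<union> R" for y
    proof (cases "G' y")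
      case None
      with that X_outside a'(1) show ?thesis by (auto simp: subst_fun_def a1_def split: if_splits)
    next
      case (Some f)
      show ?thesis
      proof (cases "y = u")
        case False
        with Some have "G y = Some f" by simp
        then have "f a1 = f a"
          using G_det X_outside by (intro determined_byD[of X f a1 a]) (auto intro: ranI simp: a1_def)
        with \<open>G y = Some f\<close> False a'(2) show ?thesis by (simp add: subst_fun_def)
      qed (use \<open>a' u\<close> in \<open>simp add: subst_fun_def\<close>)
    qed
    then have "K (subst_fun G' a1) = K a'"
      by (intro determined_byD[OF K_det, of "subst_fun G' a1" a'])
    with a'(3) have "K (subst_fun G' a1)" by simp
    then have "F a"
      unfolding exists_vars_def by (intro exI[of _ a1]) (simp add: a1_def)
    with False show False ..
  qed
  with False a' show ?thesis
    unfolding has_model_fixing_def by (intro exI[of _ a']) auto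
qed

end

lemma eval_det: "eval \<rho> w b a r \<Longrightarrow> eval \<rho> w b a r' \<Longrightarrow> r = r'"
proof (induction arbitrary: r' rule: eval.induct)
  case (eval_one b a)
  then show ?case by (cases rule: eval.cases) simp_all
next
  case (eval_high w a b r)
  from eval_high.prems eval_high.hyps eval_high.IH show ?case
    by (cases rule: eval.cases) metis+
next
  case (eval_low w a b r)
  from eval_low.prems eval_low.hyps eval_low.IH show ?case
    by (cases rule: eval.cases) metis+
qed

lemma sem_eqI: "eval \<rho> w b a r \<Longrightarrow> sem \<rho> w b a = r"
  unfolding sem_def by (rule the_equality) (auto dest: eval_det)

lemma sem_one: "sem \<rho> (one \<rho>) b = (\<lambda>_. \<not> b)"
  by (rule ext, rule sem_eqI, rule eval_one)

lemma is_cobdd_childD: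
  assumes "is_cobdd \<rho>" "w \<in> nodes \<rho>" "w \<noteq> one \<rho>" "z \<in> {low \<rho> w, high \<rho> w}"
  shows "var \<rho> w \<in> vars \<rho>" "z \<in> nodes \<rho>" "z \<noteq> one \<rho> \<Longrightarrow> var \<rho> w < var \<rho> z"
  using assms unfolding is_cobdd_def by auto

lemma card_vars_from_child_less:
  assumes "is_cobdd \<rho>" "w \<in> nodes \<rho>" "w \<noteq> one \<rho>" "z \<in> {low \<rho> w, high \<rho> w}" "z \<noteq> one \<rho>"
  shows "card {y\<in>vars \<rho>. var \<rho> z \<le> y} < card {y\<in>vars \<rho>. var \<rho> w \<le> y}"
proof (rule psubset_card_mono)
  show "finite {y\<in>vars \<rho>. var \<rho> w \<le> y}" using assms(1) by (simp add: is_cobdd_def)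
  have "var \<rho> w < var \<rho> z" "var \<rho> w \<in> vars \<rho>" using is_cobdd_childD[OF assms(1-4)] assms(5) by auto
  then show "{y\<in>vars \<rho>. var \<rho> z \<le> y} \<subset> {y\<in>vars \<rho>. var \<rho> w \<le> y}"
    by (auto dest: order.strict_trans2 simp: not_le)
qed

lemma eval_exists:
  assumes "is_cobdd \<rho>" "w \<in> nodes \<rho>"
  shows "\<exists>r. eval \<rho> w b a r"
  using assms(2)
proof (induction "card {y\<in>vars \<rho>. var \<rho> w \<le> y}" arbitrary: w b rule: less_induct)
  case less
  show ?case
  proof (cases "w = one \<rho>")
    case True
    then show ?thesis using eval_one by blast
  next
    case False
    have child: "\<exists>r. eval \<rho> z c a r" if "z \<in> {low \<rho> w, high \<rho> w}" for z c
    proof (cases "z = one \<rho>")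
      case False
      with that show ?thesis
        using less card_vars_from_child_less[OF assms(1) less.prems \<open>w \<noteq> one \<rho>\<close>]
          is_cobdd_childD(2)[OF assms(1) less.prems \<open>w \<noteq> one \<rho>\<close>] by blast
    qed (use eval_one in blast)
    show ?thesis
    proof (cases "a (var \<rho> w)")
      case True
      with \<open>w \<noteq> one \<rho>\<close> child[of "high \<rho> w" b] show ?thesis by (blast intro: eval_high)
    next
      case False
      with \<open>w \<noteq> one \<rho>\<close> child[of "low \<rho> w" "b \<noteq> flip \<rho> w"] show ?thesis by (blast intro: eval_low)
    qed
  qed
qed

lemma eval_sem:
  assumes "is_cobdd \<rho>" "w \<in> nodes \<rho>"
  shows "eval \<rho> w b a (sem \<rho> w b a)"
proof -
  obtain r where r: "eval \<rho> w b a r" using eval_exists[OF assms] by blast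
  then have "sem \<rho> w b a = r" by (rule sem_eqI)
  with r show ?thesis by simp
qed

lemma extends_refl: "extends \<rho> \<rho>"
  unfolding extends_def by auto

lemma extends_trans: "extends \<rho>1 \<rho>2 \<Longrightarrow> extends \<rho>2 \<rho>3 \<Longrightarrow> extends \<rho>1 \<rho>3"
  unfolding extends_def by (simp add: subset_iff)

lemma eval_transfer:
  assumes "is_cobdd \<rho>" and ext: "extends \<rho> \<rho>'"
  shows "eval \<rho> w b a r \<Longrightarrow> w \<in> nodes \<rho> \<Longrightarrow> \<forall>y\<in>vars \<rho>. a y = a' y \<Longrightarrow> eval \<rho>' w b a' r"
proof (induction rule: eval.induct)
  case (eval_one b a)
  from ext have "one \<rho>' = one \<rho>" by (simp add: extends_def)
  then show ?case using eval.eval_one[of \<rho>' b a'] by simp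
next
  case (eval_high w a b r)
  note child = is_cobdd_childD[OF assms(1) eval_high.prems(1) eval_high.hyps(1), of "high \<rho> w"]
  have same: "one \<rho>' = one \<rho>" "var \<rho>' w = var \<rho> w" "high \<rho>' w = high \<rho> w"
    using ext eval_high.prems(1) eval_high.hyps(1) by (simp_all add: extends_def)
  have "w \<noteq> one \<rho>'" using eval_high.hyps(1) by (simp add: same)
  moreover have "a' (var \<rho>' w)" using eval_high.hyps(2) eval_high.prems(2) child(1) by (simp add: same)
  moreover have "eval \<rho>' (high \<rho>' w) b a' r"
    using eval_high.IH child eval_high.prems(2) by (simp add: same)
  ultimately show ?case by (rule eval.eval_high)
next
  case (eval_low w a b r)
  note child = is_cobdd_childD[OF assms(1) eval_low.prems(1) eval_low.hyps(1), of "low \<rho> w"]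
  have same: "one \<rho>' = one \<rho>" "var \<rho>' w = var \<rho> w" "low \<rho>' w = low \<rho> w"
      "flip \<rho>' w = flip \<rho> w"
    using ext eval_low.prems(1) eval_low.hyps(1) by (simp_all add: extends_def)
  have "w \<noteq> one \<rho>'" using eval_low.hyps(1) by (simp add: same)
  moreover have "\<not> a' (var \<rho>' w)" using eval_low.hyps(2) eval_low.prems(2) child(1) by (simp add: same)
  moreover have "eval \<rho>' (low \<rho>' w) (b \<noteq> flip \<rho>' w) a' r"
    using eval_low.IH child eval_low.prems(2) by (simp add: same)
  ultimately show ?case by (rule eval.eval_low)
qed

lemma sem_transfer:
  assumes "is_cobdd \<rho>" "extends \<rho> \<rho>'" "w \<in> nodes \<rho>" "\<forall>y\<in>vars \<rho>. a y = a' y"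
  shows "sem \<rho>' w b a' = sem \<rho> w b a"
  using eval_transfer[OF assms(1,2) eval_sem[OF assms(1,3)] assms(3,4)] by (rule sem_eqI)

lemma sem_extends:
  assumes "is_cobdd \<rho>" "extends \<rho> \<rho>'" "w \<in> nodes \<rho>"
  shows "sem \<rho>' w b = sem \<rho> w b"
  by (intro ext sem_transfer[OF assms]) simp

lemma determined_by_vars_sem:
  assumes "is_cobdd \<rho>" "w \<in> nodes \<rho>"
  shows "determined_by (vars \<rho>) (sem \<rho> w b)"
  unfolding determined_by_def
  by (intro allI impI sem_transfer[OF assms(1) extends_refl assms(2), symmetric])

definition sem_map :: "('v, 'n) cobdd \<Rightarrow> ('v \<times> 'n \<times> bool) list \<Rightarrow> 'v \<rightharpoonup> (('v \<Rightarrow> bool) \<Rightarrow> bool)" where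
  "sem_map \<rho> acc = map_option (case_prod (sem \<rho>)) \<circ> map_of acc"

lemma dom_sem_map [simp]: "dom (sem_map \<rho> acc) = fst ` set acc"
  by (simp add: sem_map_def dom_map_of_conv_image_fst)

lemma subst_assign_eq_subst_fun: "subst_assign \<rho> ys ps = subst_fun (sem_map \<rho> (zip ys ps))"
  by (auto simp: fun_eq_iff subst_assign_def subst_fun_def sem_map_def split: option.split)

lemma sem_map_snoc:
  assumes "u \<notin> fst ` set acc"
  shows "sem_map \<rho> (acc @ [(u, w, c)]) = (sem_map \<rho> acc)(u \<mapsto> sem \<rho> w c)"
proof -
  from assms have "map_of acc u = None" by (simp add: map_of_eq_None_iff)
  then show ?thesis by (auto simp: fun_eq_iff sem_map_def map_add_def split: option.split)
qed

lemma sem_map_extends: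
  assumes "is_cobdd \<rho>" "extends \<rho> \<rho>'" "\<forall>(u, w, c)\<in>set acc. w \<in> nodes \<rho>"
  shows "sem_map \<rho>' acc = sem_map \<rho> acc"
proof
  fix y
  show "sem_map \<rho>' acc y = sem_map \<rho> acc y"
  proof (cases "map_of acc y")
    case (Some p)
    obtain w c where "p = (w, c)" by fastforce
    with Some assms(3) have "w \<in> nodes \<rho>" by (auto dest: map_of_SomeD)
    with Some \<open>p = (w, c)\<close> show ?thesis by (simp add: sem_map_def sem_extends[OF assms(1,2)])
  qed (simp add: sem_map_def)
qed

definition solver_state ::
    "('v::linorder, 'n) cobdd \<Rightarrow> 'v set \<Rightarrow> ('v \<times> 'n \<times> bool) list \<Rightarrow> 'v list \<Rightarrow> 'n \<Rightarrow> bool" where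
  "solver_state \<rho> X acc rest v \<longleftrightarrow>
     is_cobdd \<rho> \<and> vars \<rho> = X \<union> fst ` set acc \<union> set rest \<and> X \<inter> (fst ` set acc \<union> set rest) = {} \<and>
     distinct (map fst acc @ rest) \<and> v \<in> nodes \<rho> \<and> (\<forall>(u, w, c)\<in>set acc. w \<in> nodes \<rho>) \<and>
     (\<forall>f\<in>ran (sem_map \<rho> acc). determined_by X f)"

lemma solver_state_entry:
  assumes "solver_state \<rho> X acc rest v" "(u, w, c) \<in> set acc"
  shows "w \<in> nodes \<rho>" "determined_by X (sem \<rho> w c)"
proof -
  show "w \<in> nodes \<rho>" using assms by (auto simp: solver_state_def)
  from assms have "map_of acc u = Some (w, c)" by (simp add: solver_state_def)
  then have "sem_map \<rho> acc u = Some (sem \<rho> w c)" by (simp add: sem_map_def)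
  then have "sem \<rho> w c \<in> ran (sem_map \<rho> acc)" by (rule ranI)
  with assms(1) show "determined_by X (sem \<rho> w c)" by (simp add: solver_state_def)
qed

lemma app_correctD:
  assumes "app_correct app" "app \<rho> ys ps (w, c) = (\<rho>', w', c')"
    and "is_cobdd \<rho>" "distinct ys" "set ys \<subseteq> vars \<rho>" "length ps = length ys"
    and "\<forall>p\<in>set ps. fst p \<in> nodes \<rho>" "w \<in> nodes \<rho>"
  shows "is_cobdd \<rho>'" "extends \<rho> \<rho>'" "w' \<in> nodes \<rho>'"
    and "sem \<rho>' w' c' = sem \<rho> w c \<circ> subst_assign \<rho> ys ps"
  using assms(1)[unfolded app_correct_def, rule_format, of \<rho> ys ps w c] assms(2-)
  by (auto simp: fun_eq_iff)

lemma ex_correctD: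
  assumes "ex_correct ex" "ex \<rho> ys (w, c) = (\<rho>', w', c')"
    and "is_cobdd \<rho>" "set ys \<subseteq> vars \<rho>" "w \<in> nodes \<rho>"
  shows "is_cobdd \<rho>'" "extends \<rho> \<rho>'" "w' \<in> nodes \<rho>'"
    and "sem \<rho>' w' c' = exists_vars (set ys) (sem \<rho> w c)"
  using assms(1)[unfolded ex_correct_def, rule_format, of \<rho> ys w c] assms(2-)
  by (auto simp: fun_eq_iff exists_vars_def)

lemma solver_state_step:
  fixes app :: "('v::linorder, 'n) app_op" and ex :: "('v, 'n) ex_op"
  assumes app: "app_correct app" and ex: "ex_correct ex"
    and state: "solver_state \<rho> X acc (u # rest) v"
    and app_call: "app \<rho> (map fst acc @ [u]) (map snd acc @ [(one \<rho>, False)]) (v, b) = (\<rho>1, w1, c1)"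
    and ex_call: "ex \<rho>1 rest (w1, c1) = (\<rho>2, w2, c2)"
  shows "extends \<rho> \<rho>2" "solver_state \<rho>2 X (acc @ [(u, w2, c2)]) rest v"
    and "has_model_fixing (sem \<rho> v b) X (sem_map \<rho> acc) a \<Longrightarrow>
       has_model_fixing (sem \<rho> v b) X (sem_map \<rho>2 (acc @ [(u, w2, c2)])) a"
proof -
  define G where "G = sem_map \<rho> acc"
  define K where "K = sem \<rho> v b"
  have cob: "is_cobdd \<rho>" and v: "v \<in> nodes \<rho>" and acc: "\<forall>(u, w, c)\<in>set acc. w \<in> nodes \<rho>"
    and vars: "vars \<rho> = X \<union> dom G \<union> {u} \<union> set rest"
    and X_disj: "X \<inter> (dom G \<union> {u} \<union> set rest) = {}"
    and dist: "distinct (map fst acc @ [u])" "u \<notin> fst ` set acc"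
    and G_det: "\<forall>f\<in>ran G. determined_by X f"
    using state by (auto simp: solver_state_def G_def)
  have "one \<rho> \<in> nodes \<rho>" using cob by (simp add: is_cobdd_def)
  then have "set (map fst acc @ [u]) \<subseteq> vars \<rho>"
    "length (map snd acc @ [(one \<rho>, False)]) = length (map fst acc @ [u])"
    "\<forall>p\<in>set (map snd acc @ [(one \<rho>, False)]). fst p \<in> nodes \<rho>"
    using vars acc by (auto simp: G_def)
  note \<rho>1 = app_correctD[OF app app_call cob dist(1) this v]
  have "subst_assign \<rho> (map fst acc @ [u]) (map snd acc @ [(one \<rho>, False)]) = subst_fun (G(u \<mapsto> (\<lambda>_. True)))"
    by (simp add: G_def subst_assign_eq_subst_fun zip_map_fst_snd sem_map_snoc[OF dist(2)] sem_one)
  with \<rho>1(4) have sem1: "sem \<rho>1 w1 c1 = K \<circ> subst_fun (G(u \<mapsto> (\<lambda>_. True)))"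
    by (simp add: K_def)
  moreover have "vars \<rho>1 = vars \<rho>" using \<rho>1(2) by (simp add: extends_def)
  ultimately have \<rho>2: "is_cobdd \<rho>2" "extends \<rho>1 \<rho>2" "w2 \<in> nodes \<rho>2"
    "sem \<rho>2 w2 c2 = exists_vars (set rest) (K \<circ> subst_fun (G(u \<mapsto> (\<lambda>_. True))))"
    using ex_correctD[OF ex ex_call \<rho>1(1) _ \<rho>1(3)] vars by auto
  show ext: "extends \<rho> \<rho>2" using \<rho>1(2) \<rho>2(2) by (rule extends_trans)
  have K_det: "determined_by (X \<union> dom G \<union> {u} \<union> set rest) K"
    using determined_by_vars_sem[OF cob v] vars by (simp add: K_def)
  have G2: "sem_map \<rho>2 (acc @ [(u, w2, c2)]) = G(u \<mapsto> sem \<rho>2 w2 c2)"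
    using sem_map_snoc[OF dist(2)] sem_map_extends[OF cob ext acc] by (simp add: G_def)
  show "has_model_fixing (sem \<rho> v b) X (sem_map \<rho>2 (acc @ [(u, w2, c2)])) a"
    if "has_model_fixing (sem \<rho> v b) X (sem_map \<rho> acc) a"
    using has_model_fixing_step[OF K_det G_det X_disj] that G2 \<rho>2(4) by (simp add: K_def G_def)
  have "G u = None" using dist(2) by (simp add: G_def sem_map_def map_of_eq_None_iff)
  then have "ran (sem_map \<rho>2 (acc @ [(u, w2, c2)])) = insert (sem \<rho>2 w2 c2) (ran G)"
    using G2 by simp
  then have "\<forall>f\<in>ran (sem_map \<rho>2 (acc @ [(u, w2, c2)])). determined_by X f"
    using G_det determined_by_exists_vars_step[OF K_det G_det X_disj] \<rho>2(4) by simp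
  with state ext \<rho>2(1,3) show "solver_state \<rho>2 X (acc @ [(u, w2, c2)]) rest v"
    by (auto simp: solver_state_def extends_def)
qed

lemma solve_aux_correct:
  fixes app :: "('v::linorder, 'n) app_op" and ex :: "('v, 'n) ex_op"
  assumes app: "app_correct app" and ex: "ex_correct ex"
  shows "solver_state \<rho> X acc rest v \<Longrightarrow> solve_aux app ex \<rho> acc rest v b = (\<rho>', res) \<Longrightarrow>
    length res = length rest \<and> extends \<rho> \<rho>' \<and> solver_state \<rho>' X (acc @ zip rest res) [] v \<and>
    (\<forall>a. has_model_fixing (sem \<rho> v b) X (sem_map \<rho> acc) a \<longrightarrow>
         has_model_fixing (sem \<rho> v b) X (sem_map \<rho>' (acc @ zip rest res)) a)"
proof (induction rest arbitrary: \<rho> acc \<rho>' res)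
  case Nil
  then show ?case by (simp add: extends_refl)
next
  case (Cons u rest)
  obtain \<rho>1 w1 c1 where app_call:
      "app \<rho> (map fst acc @ [u]) (map snd acc @ [(one \<rho>, False)]) (v, b) = (\<rho>1, w1, c1)"
    by (metis prod_cases3)
  obtain \<rho>2 w2 c2 where ex_call: "ex \<rho>1 rest (w1, c1) = (\<rho>2, w2, c2)"
    by (metis prod_cases3)
  obtain res' where rec_call: "solve_aux app ex \<rho>2 (acc @ [(u, w2, c2)]) rest v b = (\<rho>', res')"
    and res: "res = (w2, c2) # res'"
    using Cons.prems(2) app_call ex_call by (auto split: prod.splits)
  note step = solver_state_step[OF app ex Cons.prems(1) app_call ex_call]
  have "sem \<rho>2 v b = sem \<rho> v b"
    using Cons.prems(1) step(1) by (intro sem_extends) (simp_all add: solver_state_def)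
  with Cons.IH[OF step(2) rec_call] step(1,3) res show ?case
    by (auto intro: extends_trans)
qed

theorem lemma2:
  fixes app :: "('v::linorder, 'n) app_op" and ex :: "('v, 'n) ex_op"
    and \<rho> :: "('v, 'n) cobdd" and X :: "'v set" and us :: "'v list"
    and v :: 'n and b :: bool
  assumes "app_correct app" and "ex_correct ex"
    and "is_cobdd \<rho>"
    and "vars \<rho> = X \<union> set us" and "X \<inter> set us = {}" and "distinct us"
    and "v \<in> nodes \<rho>"
    and "SolveFunctionalEq app ex \<rho> us v b = (\<rho>', res)"
  shows "length res = length us \<and>
    (\<forall>i < length us. fst (res ! i) \<in> nodes \<rho>' \<and>
       (\<forall>a a'. (\<forall>x\<in>X. a x = a' x) \<longrightarrow>
          sem \<rho>' (fst (res ! i)) (snd (res ! i)) a = sem \<rho>' (fst (res ! i)) (snd (res ! i)) a')) \<and>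
    (\<forall>a. (\<exists>a'. (\<forall>x\<in>X. a' x = a x) \<and> sem \<rho> v b a') \<longrightarrow>
       sem \<rho> v b (subst_assign \<rho>' us res a))"
proof -
  have "solver_state \<rho> X [] us v"
    using assms(3-7) by (simp add: solver_state_def sem_map_def)
  from solve_aux_correct[OF assms(1,2) this] assms(8)
  have len: "length res = length us" and state: "solver_state \<rho>' X (zip us res) [] v"
    and models: "\<And>a. has_model_fixing (sem \<rho> v b) X Map.empty a \<Longrightarrow>
        has_model_fixing (sem \<rho> v b) X (sem_map \<rho>' (zip us res)) a"
    by (simp_all add: SolveFunctionalEq_def sem_map_def)
  have "fst (res ! i) \<in> nodes \<rho>' \<and> determined_by X (sem \<rho>' (fst (res ! i)) (snd (res ! i)))"
    if "i < length us" for i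
    using solver_state_entry[OF state, of "us ! i" "fst (res ! i)" "snd (res ! i)"] that len
    by (force simp: set_zip)
  moreover have "sem \<rho> v b (subst_assign \<rho>' us res a)"
    if "\<exists>a'. (\<forall>x\<in>X. a' x = a x) \<and> sem \<rho> v b a'" for a
  proof -
    have "determined_by (X \<union> dom (sem_map \<rho>' (zip us res))) (sem \<rho> v b)"
      using determined_by_vars_sem[OF assms(3,7)] assms(4) len by (simp flip: set_map)
    with models[of a] that show ?thesis
      by (simp add: has_model_fixing_empty subst_assign_eq_subst_fun has_model_fixing_subst_fun)
  qed
  ultimately show ?thesis using len by (simp add: determined_by_def)
qed

end
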